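(* Let $(\Omega,\mathcal F,\mathbb P)$ be an atomless probability space, let $X$ and $Y$ be continuously distributed random variables on it, and let $p\in(0,1)$. The following three statements are equivalent: (i) $X$ and $Y$ are weakly comonotonic with respect to $\mathcal P^X_p$; (ii) $X$ and $Y$ are weakly comonotonic with respect to $\mathcal P^Y_p$; (iii) $A^X_p=A^Y_p$ $\mathbb P$-almost surely.
   Context: For a random variable $Z$ and $p\in(0,1)$, $\mathrm{VaR}_p(Z)=\inf\{x\in\mathbb R:\mathbb P(Z\le x)>p\}$ and $A^Z_p=\{\omega\in\Omega: Z(\omega)>\mathrm{VaR}_p(Z)\}$. Let $\mathcal P^Z_p=\{\delta_\omega\times\delta_{\omega'}:\omega\in A^Z_p,\ \omega'\in (A^Z_p)^c\}$, where $\delta_\omega$ is the point mass at $\omega$. For a set $\mathcal P$ of product probability measures $\pi_1\times\pi_2$ on $(\Omega^2,\mathcal F\otimes\mathcal F)$, random variables $X,Y$ are called weakly comonotonic with respect to $\mathcal P$ if $\iint_{\Omega^2}(X(\omega)-X(\omega'))(Y(\omega)-Y(\omega'))\,\pi_1(\mathrm d\omega)\pi_2(\mathrm d\omega')\ge 0$ for every $\pi_1\times\pi_2\in\mathcal P$; for point masses this means $(X(\omega)-X(\omega'))(Y(\omega)-Y(\omega'))\ge0$. Random variables that are $\mathbb P$-a.s. equal are identified, so a statement such as "$X$ and $Y$ are weakly comonotonic with respect to $\mathcal P^X_p$" means that it holds for some representative versions of $X$ and $Y$. *)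

theory Defs
  imports "HOL-Probability.Probability"
begin

definition atomless :: "'a measure \<Rightarrow> bool" where
  "atomless M \<longleftrightarrow> (\<forall>A\<in>sets M. measure M A > 0 \<longrightarrow>
     (\<exists>B\<in>sets M. B \<subseteq> A \<and> 0 < measure M B \<and> measure M B < measure M A))"

definition continuously_distributed :: "'a measure \<Rightarrow> ('a \<Rightarrow> real) \<Rightarrow> bool" where
  "continuously_distributed M Z \<longleftrightarrow> (\<forall>x. measure M {\<omega>\<in>space M. Z \<omega> = x} = 0)"

definition VaR :: "'a measure \<Rightarrow> real \<Rightarrow> ('a \<Rightarrow> real) \<Rightarrow> real" where
  "VaR M p Z = Inf {x. measure M {\<omega>\<in>space M. Z \<omega> \<le> x} > p}"

definition tail_set :: "'a measure \<Rightarrow> real \<Rightarrow> ('a \<Rightarrow> real) \<Rightarrow> 'a set" where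
  "tail_set M p Z = {\<omega>\<in>space M. Z \<omega> > VaR M p Z}"

text \<open>Weak comonotonicity w.r.t. the set of products of point masses
  \<delta>_\<omega> \<times> \<delta>_\<omega>' with \<omega> \<in> A^Z_p, \<omega>' \<in> (A^Z_p)^c (complement within the sample space).\<close>
definition weakly_comonotonic_pts :: "'a measure \<Rightarrow> 'a set \<Rightarrow> ('a \<Rightarrow> real) \<Rightarrow> ('a \<Rightarrow> real) \<Rightarrow> bool" where
  "weakly_comonotonic_pts M A X Y \<longleftrightarrow>
     (\<forall>\<omega>\<in>A. \<forall>\<omega>'\<in>space M - A. (X \<omega> - X \<omega>') * (Y \<omega> - Y \<omega>') \<ge> 0)"

text \<open>"X and Y are weakly comonotonic w.r.t. P^Z_p" up to a.s. identification, where Z is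
  X or Y (selected by the function sel): there are measurable versions X', Y' a.s. equal to
  X, Y such that X', Y' are weakly comonotonic w.r.t. P^{sel X' Y'}_p.\<close>
definition wc_wrt_tail :: "'a measure \<Rightarrow> real \<Rightarrow> (('a \<Rightarrow> real) \<Rightarrow> ('a \<Rightarrow> real) \<Rightarrow> ('a \<Rightarrow> real))
     \<Rightarrow> ('a \<Rightarrow> real) \<Rightarrow> ('a \<Rightarrow> real) \<Rightarrow> bool" where
  "wc_wrt_tail M p sel X Y \<longleftrightarrow>
     (\<exists>X' Y'. X' \<in> borel_measurable M \<and> Y' \<in> borel_measurable M \<and>
        (AE \<omega> in M. X \<omega> = X' \<omega>) \<and> (AE \<omega> in M. Y \<omega> = Y' \<omega>) \<and>
        weakly_comonotonic_pts M (tail_set M p (sel X' Y')) X' Y')"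

end

theory Submission
  imports Defs
begin

text \<open>
  For a continuously distributed \<open>Z\<close> the value \<open>VaR\<^sub>p(Z)\<close> is an exact \<open>p\<close>-quantile, so the tail
  event \<open>A\<^sup>Z\<^sub>p\<close> has probability \<open>1 - p\<close>. If \<open>X\<close> and \<open>Y\<close> are weakly comonotonic with respect to
  \<open>\<P>\<^sup>X\<^sub>p\<close>, every value of \<open>Y\<close> on \<open>A\<^sup>X\<^sub>p\<close> dominates every value of \<open>Y\<close> off it; with
  \<open>c = inf Y(A\<^sup>X\<^sub>p)\<close> the event \<open>A\<^sup>X\<^sub>p\<close> is therefore \<open>{Y > c}\<close> up to the null set \<open>{Y = c}\<close>.
  Having probability \<open>1 - p\<close>, the event \<open>{Y > c}\<close> agrees a.s. with \<open>{Y > VaR\<^sub>p(Y)} = A\<^sup>Y\<^sub>p\<close>.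
  Conversely, if \<open>A\<^sup>X\<^sub>p = A\<^sup>Y\<^sub>p\<close> a.s., redefining \<open>X\<close> and \<open>Y\<close> on the exceptional null set makes
  the two tail events equal, and then both variables are larger inside the common tail event than
  outside it. The roles of \<open>X\<close> and \<open>Y\<close> are symmetric, which gives (ii).
\<close>

lemma continuous_Inf_superlevel_eq:
  fixes F :: "real \<Rightarrow> real"
  assumes contF: "continuous_on UNIV F"
    and below: "eventually (\<lambda>x. F x < p) at_bot"
    and above: "eventually (\<lambda>x. p < F x) at_top"
  shows "F (Inf {x. p < F x}) = p"
proof -
  define S where "S = {x. p < F x}"
  from above obtain x1 where "p < F x1"
    by (meson eventually_at_top_linorder order_refl)
  then have "S \<noteq> {}" unfolding S_def by auto
  from below obtain x0 where x0: "\<And>x. x \<le> x0 \<Longrightarrow> F x < p"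
    by (auto simp: eventually_at_bot_linorder)
  have lower: "\<forall>a\<in>S. x0 < a"
  proof
    fix a assume "a \<in> S"
    then have "p < F a" unfolding S_def by simp
    then show "x0 < a" using x0[of a] by (cases "a \<le> x0") auto
  qed
  then have "bdd_below S" by (meson bdd_below.I less_imp_le)
  have "open S" unfolding S_def using contF
    by (simp add: open_Collect_less continuous_on_const)
  then have "Inf S \<notin> S" using Inf_notin_open lower by blast
  moreover have "closed {x. p \<le> F x}" using contF
    by (simp add: closed_Collect_le continuous_on_const)
  then have "Inf S \<in> {x. p \<le> F x}"
    by (rule closed_subset_contains_Inf) (use \<open>S \<noteq> {}\<close> \<open>bdd_below S\<close> in \<open>auto simp: S_def\<close>)
  ultimately show ?thesis unfolding S_def by simp
qed

context prob_space
begin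

lemma prob_le_VaR:
  assumes Z: "Z \<in> borel_measurable M" and cZ: "continuously_distributed M Z"
    and p: "0 < p" "p < 1"
  shows "prob {\<omega>\<in>space M. Z \<omega> \<le> VaR M p Z} = p"
proof -
  define D where "D = distr M borel Z"
  interpret D: real_distribution D unfolding D_def using Z by simp
  have cdf_eq: "prob {\<omega>\<in>space M. Z \<omega> \<le> x} = cdf D x" for x
    unfolding cdf_def D_def using Z
    by (subst measure_distr) (auto intro!: arg_cong[where f="measure M"])
  have "measure D {x} = prob {\<omega>\<in>space M. Z \<omega> = x}" for x
    unfolding D_def using Z by (subst measure_distr) (auto intro!: arg_cong[where f="measure M"])
  then have "isCont (cdf D) x" for x
    using cZ D.isCont_cdf unfolding continuously_distributed_def by simp
  then have "continuous_on UNIV (cdf D)"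
    by (simp add: continuous_at_imp_continuous_on)
  moreover have "eventually (\<lambda>x. cdf D x < p) at_bot"
    using D.cdf_lim_at_bot p by (simp add: order_tendstoD)
  moreover have "eventually (\<lambda>x. p < cdf D x) at_top"
    using D.cdf_lim_at_top_prob p by (simp add: order_tendstoD)
  ultimately have "cdf D (Inf {x. p < cdf D x}) = p"
    by (rule continuous_Inf_superlevel_eq)
  then show ?thesis unfolding VaR_def cdf_eq .
qed

lemma prob_tail_set:
  assumes Z: "Z \<in> borel_measurable M" and cZ: "continuously_distributed M Z"
    and p: "0 < p" "p < 1"
  shows "prob (tail_set M p Z) = 1 - p"
proof -
  have "space M - tail_set M p Z = {\<omega>\<in>space M. Z \<omega> \<le> VaR M p Z}"
    unfolding tail_set_def by auto
  moreover have "tail_set M p Z \<in> events" unfolding tail_set_def using Z by measurable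
  then have "prob (space M - tail_set M p Z) = 1 - prob (tail_set M p Z)" by (rule prob_compl)
  ultimately show ?thesis using prob_le_VaR[OF assms] by simp
qed

lemma AE_superlevel_eq:
  fixes Y :: "'a \<Rightarrow> real"
  assumes Y: "Y \<in> borel_measurable M"
    and same_prob: "prob {\<omega>\<in>space M. Y \<omega> \<le> a} = prob {\<omega>\<in>space M. Y \<omega> \<le> b}"
  shows "AE \<omega> in M. (a < Y \<omega>) = (b < Y \<omega>)"
proof -
  define sub where "sub x = {\<omega>\<in>space M. Y \<omega> \<le> x}" for x
  have sets: "sub x \<in> events" for x
    unfolding sub_def using Y by measurable
  have mono: "sub (min a b) \<subseteq> sub (max a b)" unfolding sub_def by auto
  have "prob (sub (max a b) - sub (min a b)) = 0"
    using finite_measure_Diff[OF sets sets mono] same_prob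
    unfolding sub_def min_def max_def by simp
  then have "sub (max a b) - sub (min a b) \<in> null_sets M"
    using sets by (simp add: null_sets_def emeasure_eq_measure)
  moreover have "{\<omega>\<in>space M. (a < Y \<omega>) \<noteq> (b < Y \<omega>)} \<subseteq> sub (max a b) - sub (min a b)"
    unfolding sub_def by auto
  ultimately show ?thesis by (rule AE_I')
qed

lemma AE_superlevel_eq_tail_set:
  assumes Y: "Y \<in> borel_measurable M" and cY: "continuously_distributed M Y"
    and p: "0 < p" "p < 1"
    and prob_superlevel: "prob {\<omega>\<in>space M. c < Y \<omega>} = 1 - p"
  shows "AE \<omega> in M. (c < Y \<omega>) = (\<omega> \<in> tail_set M p Y)"
proof -
  have "{\<omega>\<in>space M. Y \<omega> \<le> c} \<in> events" using Y by measurable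
  then have "prob (space M - {\<omega>\<in>space M. Y \<omega> \<le> c}) = 1 - prob {\<omega>\<in>space M. Y \<omega> \<le> c}"
    by (rule prob_compl)
  moreover have "space M - {\<omega>\<in>space M. Y \<omega> \<le> c} = {\<omega>\<in>space M. c < Y \<omega>}" by auto
  ultimately have "prob {\<omega>\<in>space M. Y \<omega> \<le> c} = prob {\<omega>\<in>space M. Y \<omega> \<le> VaR M p Y}"
    using prob_superlevel prob_le_VaR[OF Y cY p] by simp
  then have "AE \<omega> in M. (c < Y \<omega>) = (VaR M p Y < Y \<omega>)"
    by (rule AE_superlevel_eq[OF Y])
  with AE_space show ?thesis by eventually_elim (auto simp: tail_set_def)
qed

lemma AE_eq_superlevel_if_separated:
  assumes Y: "Y \<in> borel_measurable M" and cY: "continuously_distributed M Y"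
    and A: "A \<subseteq> space M" "A \<noteq> {}" "space M - A \<noteq> {}"
    and separated: "\<And>w w'. w \<in> A \<Longrightarrow> w' \<in> space M - A \<Longrightarrow> Y w' \<le> Y w"
  shows "AE \<omega> in M. (\<omega> \<in> A) = (Inf (Y ` A) < Y \<omega>)"
proof -
  define c where "c = Inf (Y ` A)"
  obtain b where b: "b \<in> space M - A" using A(3) by blast
  have "bdd_below (Y ` A)" using separated[OF _ b] by (auto intro: bdd_belowI[where m="Y b"])
  then have "c \<le> Y w" if "w \<in> A" for w unfolding c_def using that by (auto intro: cInf_lower)
  moreover have "Y w' \<le> c" if "w' \<in> space M - A" for w' unfolding c_def
    by (rule cInf_greatest) (use A(2) separated that in auto)
  ultimately have "{\<omega>\<in>space M. (\<omega> \<in> A) \<noteq> (c < Y \<omega>)} \<subseteq> {\<omega>\<in>space M. Y \<omega> = c}"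
    by force
  moreover have "{\<omega>\<in>space M. Y \<omega> = c} \<in> null_sets M"
    using cY Y unfolding continuously_distributed_def
    by (simp add: null_sets_def emeasure_eq_measure)
  ultimately show ?thesis unfolding c_def[symmetric]
    by (intro AE_I') auto
qed

lemma AE_tail_set_eq_if_weakly_comonotonic:
  assumes X: "X \<in> borel_measurable M" and cX: "continuously_distributed M X"
    and Y: "Y \<in> borel_measurable M" and cY: "continuously_distributed M Y"
    and p: "0 < p" "p < 1"
    and wc: "weakly_comonotonic_pts M (tail_set M p X) X Y"
  shows "AE \<omega> in M. (\<omega> \<in> tail_set M p X) = (\<omega> \<in> tail_set M p Y)"
proof -
  define A where "A = tail_set M p X"
  define c where "c = Inf (Y ` A)"
  have A_sets: "A \<in> events" unfolding A_def tail_set_def using X by measurable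
  then have "A \<subseteq> space M" by (rule sets.sets_into_space)
  have prob_A: "prob A = 1 - p" unfolding A_def using prob_tail_set[OF X cX p] .
  have "A \<noteq> {}" using prob_A p by auto
  have "prob (space M - A) = p" using prob_compl[OF A_sets] prob_A by simp
  then have "space M - A \<noteq> {}" using p by (metis measure_empty less_irrefl)
  have separated: "Y w' \<le> Y w" if "w \<in> A" "w' \<in> space M - A" for w w'
  proof -
    have "X w' < X w" using that unfolding A_def tail_set_def by auto
    moreover have "0 \<le> (X w - X w') * (Y w - Y w')"
      using wc that unfolding weakly_comonotonic_pts_def A_def by blast
    ultimately show ?thesis by (simp add: zero_le_mult_iff)
  qed
  have A_superlevel: "AE \<omega> in M. (\<omega> \<in> A) = (c < Y \<omega>)"
    unfolding c_def using \<open>A \<noteq> {}\<close> \<open>space M - A \<noteq> {}\<close> separated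
    by (rule AE_eq_superlevel_if_separated[OF Y cY \<open>A \<subseteq> space M\<close>])
  have "prob {\<omega>\<in>space M. c < Y \<omega>} = prob A"
    by (rule measure_eq_AE) (use A_superlevel A_sets Y in auto)
  then have "AE \<omega> in M. (c < Y \<omega>) = (\<omega> \<in> tail_set M p Y)"
    using prob_A by (intro AE_superlevel_eq_tail_set[OF Y cY p]) simp
  then show ?thesis using A_superlevel unfolding A_def by eventually_elim simp
qed

lemma VaR_AE_cong:
  assumes "X \<in> borel_measurable M" "X' \<in> borel_measurable M" "AE \<omega> in M. X \<omega> = X' \<omega>"
  shows "VaR M p X' = VaR M p X"
proof -
  have "prob {\<omega>\<in>space M. X' \<omega> \<le> x} = prob {\<omega>\<in>space M. X \<omega> \<le> x}" for x
    by (rule measure_eq_AE) (use assms in auto)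
  then show ?thesis unfolding VaR_def by simp
qed

lemma continuously_distributed_AE_cong:
  assumes "X \<in> borel_measurable M" "X' \<in> borel_measurable M" "AE \<omega> in M. X \<omega> = X' \<omega>"
    and "continuously_distributed M X"
  shows "continuously_distributed M X'"
proof -
  have "prob {\<omega>\<in>space M. X' \<omega> = x} = prob {\<omega>\<in>space M. X \<omega> = x}" for x
    by (rule measure_eq_AE) (use assms in auto)
  then show ?thesis using assms(4) unfolding continuously_distributed_def by simp
qed

lemma tail_set_AE_cong:
  assumes "X \<in> borel_measurable M" "X' \<in> borel_measurable M" "AE \<omega> in M. X \<omega> = X' \<omega>"
  shows "AE \<omega> in M. (\<omega> \<in> tail_set M p X) = (\<omega> \<in> tail_set M p X')"
  using assms(3) unfolding tail_set_def VaR_AE_cong[OF assms]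
  by eventually_elim auto

lemma AE_tail_set_eq_if_wc_wrt_tail:
  assumes X: "X \<in> borel_measurable M" and cX: "continuously_distributed M X"
    and Y: "Y \<in> borel_measurable M" and cY: "continuously_distributed M Y"
    and p: "0 < p" "p < 1"
    and wc: "wc_wrt_tail M p (\<lambda>U V. U) X Y"
  shows "AE \<omega> in M. (\<omega> \<in> tail_set M p X) = (\<omega> \<in> tail_set M p Y)"
proof -
  obtain X' Y' where X': "X' \<in> borel_measurable M" and Y': "Y' \<in> borel_measurable M"
    and XX': "AE \<omega> in M. X \<omega> = X' \<omega>" and YY': "AE \<omega> in M. Y \<omega> = Y' \<omega>"
    and wc': "weakly_comonotonic_pts M (tail_set M p X') X' Y'"
    using wc unfolding wc_wrt_tail_def by blast
  have "AE \<omega> in M. (\<omega> \<in> tail_set M p X') = (\<omega> \<in> tail_set M p Y')"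
    using X' continuously_distributed_AE_cong[OF X X' XX' cX]
      Y' continuously_distributed_AE_cong[OF Y Y' YY' cY] p wc'
    by (rule AE_tail_set_eq_if_weakly_comonotonic)
  with tail_set_AE_cong[where p=p, OF X X' XX'] tail_set_AE_cong[where p=p, OF Y Y' YY']
  show ?thesis by eventually_elim simp
qed

lemma weakly_comonotonic_pts_common_tail_set:
  assumes "tail_set M p X = tail_set M p Y"
  shows "weakly_comonotonic_pts M (tail_set M p X) X Y"
  unfolding weakly_comonotonic_pts_def
proof (intro ballI)
  fix w w' assume w: "w \<in> tail_set M p X" and w': "w' \<in> space M - tail_set M p X"
  have "X w' < X w" using w w' unfolding tail_set_def by auto
  moreover have "Y w' < Y w" using w w' unfolding assms unfolding tail_set_def by auto
  ultimately show "0 \<le> (X w - X w') * (Y w - Y w')" by simp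
qed

lemma versions_with_equal_tail_sets:
  assumes X: "X \<in> borel_measurable M" and Y: "Y \<in> borel_measurable M"
    and ae: "AE \<omega> in M. (\<omega> \<in> tail_set M p X) = (\<omega> \<in> tail_set M p Y)"
  obtains X' Y' where "X' \<in> borel_measurable M" "Y' \<in> borel_measurable M"
    "AE \<omega> in M. X \<omega> = X' \<omega>" "AE \<omega> in M. Y \<omega> = Y' \<omega>"
    "tail_set M p X' = tail_set M p Y'"
proof -
  define N where "N = {\<omega>\<in>space M. (\<omega> \<in> tail_set M p X) \<noteq> (\<omega> \<in> tail_set M p Y)}"
  have N_sets: "N \<in> events" unfolding N_def tail_set_def using X Y by measurable
  have "AE \<omega> in M. \<omega> \<notin> N" using ae unfolding N_def by eventually_elim auto
  \<comment> \<open>Setting both versions to their VaR on \<open>N\<close> moves \<open>N\<close> out of both tail sets.\<close>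
  define X' where "X' \<omega> = (if \<omega> \<in> N then VaR M p X else X \<omega>)" for \<omega>
  define Y' where "Y' \<omega> = (if \<omega> \<in> N then VaR M p Y else Y \<omega>)" for \<omega>
  have X': "X' \<in> borel_measurable M" unfolding X'_def
    by (rule measurable_If_set) (use X N_sets in auto)
  have Y': "Y' \<in> borel_measurable M" unfolding Y'_def
    by (rule measurable_If_set) (use Y N_sets in auto)
  have XX': "AE \<omega> in M. X \<omega> = X' \<omega>"
    using \<open>AE \<omega> in M. \<omega> \<notin> N\<close> by eventually_elim (simp add: X'_def)
  have YY': "AE \<omega> in M. Y \<omega> = Y' \<omega>"
    using \<open>AE \<omega> in M. \<omega> \<notin> N\<close> by eventually_elim (simp add: Y'_def)
  have "tail_set M p X' = tail_set M p X - N" "tail_set M p Y' = tail_set M p Y - N"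
    unfolding tail_set_def VaR_AE_cong[OF X X' XX'] VaR_AE_cong[OF Y Y' YY']
    by (auto simp: X'_def Y'_def N_def tail_set_def)
  then have "tail_set M p X' = tail_set M p Y'" by (auto simp: N_def tail_set_def)
  with X' Y' XX' YY' show thesis by (rule that)
qed

lemma wc_wrt_tail_if_AE_tail_set_eq:
  assumes X: "X \<in> borel_measurable M" and Y: "Y \<in> borel_measurable M"
    and ae: "AE \<omega> in M. (\<omega> \<in> tail_set M p X) = (\<omega> \<in> tail_set M p Y)"
  shows "wc_wrt_tail M p (\<lambda>U V. U) X Y" and "wc_wrt_tail M p (\<lambda>U V. V) X Y"
proof -
  obtain X' Y' where versions: "X' \<in> borel_measurable M" "Y' \<in> borel_measurable M"
    "AE \<omega> in M. X \<omega> = X' \<omega>" "AE \<omega> in M. Y \<omega> = Y' \<omega>"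
    and tails: "tail_set M p X' = tail_set M p Y'"
    using versions_with_equal_tail_sets[OF X Y ae] .
  have wc_X: "weakly_comonotonic_pts M (tail_set M p X') X' Y'"
    using tails by (rule weakly_comonotonic_pts_common_tail_set)
  then have wc_Y: "weakly_comonotonic_pts M (tail_set M p Y') X' Y'"
    unfolding tails .
  show "wc_wrt_tail M p (\<lambda>U V. U) X Y" "wc_wrt_tail M p (\<lambda>U V. V) X Y"
    unfolding wc_wrt_tail_def by (intro exI[of _ X'] exI[of _ Y'] conjI versions wc_X wc_Y)+
qed

end

lemma weakly_comonotonic_pts_commute:
  "weakly_comonotonic_pts M A X Y \<longleftrightarrow> weakly_comonotonic_pts M A Y X"
  unfolding weakly_comonotonic_pts_def by (simp add: mult.commute)

lemma wc_wrt_tail_swap: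
  assumes "wc_wrt_tail M p sel X Y"
  shows "wc_wrt_tail M p (\<lambda>U V. sel V U) Y X"
proof -
  obtain X' Y' where "X' \<in> borel_measurable M" "Y' \<in> borel_measurable M"
    "AE \<omega> in M. X \<omega> = X' \<omega>" "AE \<omega> in M. Y \<omega> = Y' \<omega>"
    "weakly_comonotonic_pts M (tail_set M p (sel X' Y')) X' Y'"
    using assms unfolding wc_wrt_tail_def by blast
  then show ?thesis unfolding wc_wrt_tail_def
    by (intro exI[of _ Y'] exI[of _ X']) (simp add: weakly_comonotonic_pts_commute)
qed

theorem lemma3p1:
  fixes M :: "'a measure" and X Y :: "'a \<Rightarrow> real" and p :: real
  assumes "prob_space M" and "atomless M"
    and "X \<in> borel_measurable M" and "Y \<in> borel_measurable M"
    and "continuously_distributed M X" and "continuously_distributed M Y"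
    and "0 < p" and "p < 1"
  shows "(wc_wrt_tail M p (\<lambda>U V. U) X Y \<longleftrightarrow> wc_wrt_tail M p (\<lambda>U V. V) X Y)
       \<and> (wc_wrt_tail M p (\<lambda>U V. V) X Y \<longleftrightarrow>
            (AE \<omega> in M. (\<omega> \<in> tail_set M p X) = (\<omega> \<in> tail_set M p Y)))"
proof -
  interpret prob_space M by fact
  note X = assms(3,5) and Y = assms(4,6) and p = assms(7,8)
  let ?tails_AE_eq = "AE \<omega> in M. (\<omega> \<in> tail_set M p X) = (\<omega> \<in> tail_set M p Y)"
  have i_iii: "?tails_AE_eq" if "wc_wrt_tail M p (\<lambda>U V. U) X Y"
    using X Y p that by (rule AE_tail_set_eq_if_wc_wrt_tail)
  have ii_iii: "?tails_AE_eq" if "wc_wrt_tail M p (\<lambda>U V. V) X Y"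
  proof -
    have "AE \<omega> in M. (\<omega> \<in> tail_set M p Y) = (\<omega> \<in> tail_set M p X)"
      using Y X p wc_wrt_tail_swap[OF that]
      by (rule AE_tail_set_eq_if_wc_wrt_tail)
    then show ?thesis by eventually_elim simp
  qed
  show ?thesis
    using i_iii ii_iii wc_wrt_tail_if_AE_tail_set_eq[OF assms(3,4)] by blast
qed

end
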